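(* Let $d\ge3$ and let $G$ be a $d$-regular graph on $n$ nodes. Then $\mathsf{OPT}(G)>\frac{0.86}{d}-\frac{4}{n}$. Moreover, if $n>40d^9$, then $\mathsf{OPT}(G)>\frac{0.26}{\sqrt d}$.
   Context: For a finite simple undirected graph $G=(V,E)$ with $m=|E|\ge1$ edges, degrees $d_v$, and $a_{u,v}=1$ if $\{u,v\}\in E$ and $0$ otherwise: for $C\subseteq V$, $\mathsf M(C)=\frac{1}{2m}\sum_{u\in C}\sum_{v\in C}\big(a_{u,v}-\frac{d_ud_v}{2m}\big)$ (ordered pairs, including $u=v$). A clustering is a partition $\mathcal S$ of $V$ into nonempty clusters, with $\mathsf M(\mathcal S)=\sum_{C\in\mathcal S}\mathsf M(C)$; $\mathsf{OPT}(G)$ is the maximum of $\mathsf M(\mathcal S)$ over all clusterings. *)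

theory Defs
  imports "HOL-Analysis.Analysis"
begin

definition simple_graph :: "'a set \<Rightarrow> ('a \<Rightarrow> 'a \<Rightarrow> bool) \<Rightarrow> bool" where
  "simple_graph V E \<longleftrightarrow> finite V \<and> (\<forall>u v. E u v \<longrightarrow> u \<in> V \<and> v \<in> V)
     \<and> (\<forall>u v. E u v \<longrightarrow> E v u) \<and> (\<forall>u. \<not> E u u)"

definition adj :: "('a \<Rightarrow> 'a \<Rightarrow> bool) \<Rightarrow> 'a \<Rightarrow> 'a \<Rightarrow> real" where
  "adj E u v = (if E u v then 1 else 0)"

definition degree :: "'a set \<Rightarrow> ('a \<Rightarrow> 'a \<Rightarrow> bool) \<Rightarrow> 'a \<Rightarrow> nat" where
  "degree V E v = card {u \<in> V. E v u}"

definition num_edges :: "'a set \<Rightarrow> ('a \<Rightarrow> 'a \<Rightarrow> bool) \<Rightarrow> nat" where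
  "num_edges V E = card {{u, v} | u v. u \<in> V \<and> v \<in> V \<and> E u v}"

definition regular :: "'a set \<Rightarrow> ('a \<Rightarrow> 'a \<Rightarrow> bool) \<Rightarrow> nat \<Rightarrow> bool" where
  "regular V E d \<longleftrightarrow> (\<forall>v \<in> V. degree V E v = d)"

text \<open>Modularity of a single cluster C (ordered pairs, including u = v).\<close>
definition cluster_modularity :: "'a set \<Rightarrow> ('a \<Rightarrow> 'a \<Rightarrow> bool) \<Rightarrow> 'a set \<Rightarrow> real" where
  "cluster_modularity V E C =
     (let m = real (num_edges V E) in
      (1 / (2 * m)) * (\<Sum>u\<in>C. \<Sum>v\<in>C. adj E u v - real (degree V E u) * real (degree V E v) / (2 * m)))"

definition is_clustering :: "'a set \<Rightarrow> 'a set set \<Rightarrow> bool" where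
  "is_clustering V S \<longleftrightarrow> \<Union>S = V \<and> {} \<notin> S \<and> (\<forall>A\<in>S. \<forall>B\<in>S. A \<noteq> B \<longrightarrow> A \<inter> B = {})"

definition modularity :: "'a set \<Rightarrow> ('a \<Rightarrow> 'a \<Rightarrow> bool) \<Rightarrow> 'a set set \<Rightarrow> real" where
  "modularity V E S = (\<Sum>C\<in>S. cluster_modularity V E C)"

definition OPT :: "'a set \<Rightarrow> ('a \<Rightarrow> 'a \<Rightarrow> bool) \<Rightarrow> real" where
  "OPT V E = Max (modularity V E ` {S. is_clustering V S})"

end

theory Submission
  imports Defs
begin

text \<open>
  For a \<open>d\<close>-regular graph, \<open>2m = dn\<close>, so the modularity of a cluster \<open>C\<close> is the sum of
  \<open>adj u v - d/n\<close> over all \<open>u, v \<in> C\<close>, divided by \<open>dn\<close>.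

  First bound, \<open>OPT \<ge> 1/d - 4/n\<close>: take a packing of vertex-disjoint stars with one to three
  leaves covering as many vertices as possible.  Local exchanges show that every neighbour of an
  uncovered vertex is the centre of a star with three leaves; double counting the edges at
  uncovered vertices then shows that the stars carry at least \<open>n/2\<close> leaves.  Clustering along the
  stars (and singletons) gives modularity at least \<open>1/d - 4/n > 0.86/d - 4/n\<close>.

  Second bound, \<open>OPT \<ge> 0.26/\<surd>d\<close> for \<open>n > 40d\<^sup>9\<close>: toss two fair coins at every vertex.  A vertex
  whose coins agree gets the corresponding sign; a tied vertex takes the majority sign of the coin
  sums of its neighbours.  Averaging over all outcomes (sums over all subsets of the coins) and
  using symmetries that flip groups of coins, the bisection by these signs has expected quadratic
  form at least \<open>n \<cdot> E|Bin(2d,1/2) - d| - O(d\<^sup>3)\<close>, and the mean absolute deviation of the binomial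
  is at least \<open>0.54 \<surd>d\<close>.
\<close>

subsection \<open>The mean absolute deviation of a symmetric binomial distribution\<close>

text \<open>Partial sums of \<open>C(2d,k)(d - k)\<close> telescope by Pascal's rule and absorption.\<close>
lemma binomial_deviation_partial_sum:
  fixes d j :: nat
  assumes "d \<ge> 1"
  shows "(\<Sum>k=0..j. real (2*d choose k) * (real d - real k)) = real d * real ((2*d-1) choose j)"
proof (induction j)
  case 0
  then show ?case by simp
next
  case (Suc j)
  define N where "N = 2*d - 1"
  have N: "2*d = Suc N" using assms N_def by simp
  have pascal: "real (2*d choose Suc j) = real (N choose j) + real (N choose Suc j)"
    unfolding N by simp
  have absorb: "real (Suc j) * real (2*d choose Suc j) = real (2*d) * real (N choose j)"
    unfolding N using Suc_times_binomial[of j N] by (metis of_nat_mult)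
  have "(\<Sum>k=0..Suc j. real (2*d choose k) * (real d - real k)) =
        real d * real (N choose j) + real (2*d choose Suc j) * (real d - real (Suc j))"
    using Suc N_def by simp
  also have "\<dots> = real d * real (N choose Suc j)"
    using pascal absorb by (simp add: algebra_simps)
  finally show ?case using N_def by simp
qed

text \<open>Splitting at \<open>k = d\<close>: \<open>\<Sum>\<^sub>k C(2d,k) |k - d| = 2d \<cdot> C(2d-1,d)\<close>.\<close>
lemma binomial_mean_abs_deviation:
  fixes d :: nat
  assumes "d \<ge> 1"
  shows "(\<Sum>k=0..2*d. real (2*d choose k) * \<bar>real k - real d\<bar>) = 2 * real d * real ((2*d-1) choose d)"
proof -
  define f where "f k = real (2*d choose k) * (real d - real k)" for k
  have split: "{0..2*d} = {0..d} \<union> {d+1..2*d}" "{0..d} \<inter> {d+1..2*d} = {}" by auto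
  have "(\<Sum>k=0..2*d. real (2*d choose k) * \<bar>real k - real d\<bar>) = (\<Sum>k=0..d. f k) - (\<Sum>k=d+1..2*d. f k)"
  proof -
    have "(\<Sum>k=0..d. real (2*d choose k) * \<bar>real k - real d\<bar>) = (\<Sum>k=0..d. f k)"
      unfolding f_def by (intro sum.cong) auto
    moreover have "(\<Sum>k=d+1..2*d. real (2*d choose k) * \<bar>real k - real d\<bar>) = - (\<Sum>k=d+1..2*d. f k)"
      unfolding f_def by (simp add: sum_negf[symmetric]) (intro sum.cong, auto simp: algebra_simps)
    moreover have "(\<Sum>k=0..2*d. real (2*d choose k) * \<bar>real k - real d\<bar>) =
        (\<Sum>k=0..d. real (2*d choose k) * \<bar>real k - real d\<bar>)
        + (\<Sum>k=d+1..2*d. real (2*d choose k) * \<bar>real k - real d\<bar>)"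
      unfolding split(1) by (rule sum.union_disjoint[OF _ _ split(2)]) auto
    ultimately show ?thesis by linarith
  qed
  moreover have "(\<Sum>k=0..d. f k) + (\<Sum>k=d+1..2*d. f k) = 0"
  proof -
    have "(\<Sum>k=0..d. f k) + (\<Sum>k=d+1..2*d. f k) = (\<Sum>k=0..2*d. f k)"
      unfolding split(1) by (rule sum.union_disjoint[symmetric, OF _ _ split(2)]) auto
    also have "\<dots> = 0"
      using binomial_deviation_partial_sum[OF assms, of "2*d"] assms unfolding f_def by simp
    finally show ?thesis .
  qed
  moreover have "(\<Sum>k=0..d. f k) = real d * real ((2*d-1) choose d)"
    unfolding f_def by (rule binomial_deviation_partial_sum[OF assms])
  ultimately show ?thesis by linarith
qed

lemma central_binomial_step:
  fixes d :: nat
  assumes "d \<ge> 1"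
  shows "real (Suc d) * real ((2*Suc d - 1) choose Suc d) = 2 * (2 * real d + 1) * real ((2*d-1) choose d)"
proof -
  obtain d' where d': "d = Suc d'" using assms by (metis Suc_le_D One_nat_def)
  define N where "N = 2*d - 1"
  have N: "2*d = Suc N" "N = d' + d" using assms d' N_def by simp_all
  have "(2*d choose d) = (N choose d') + (N choose d)"
    using binomial_Suc_Suc[of N d'] unfolding N(1) d'[symmetric] by simp
  also have "(N choose d') = (N choose d)"
    using binomial_symmetric[of d' N] N(2) by simp
  finally have central: "(2*d choose d) = 2 * (N choose d)" by simp
  have "Suc d * (Suc (2*d) choose Suc d) = Suc (2*d) * (2*d choose d)"
    by (rule Suc_times_binomial)
  then have "real (Suc d) * real (Suc (2*d) choose Suc d) = real (Suc (2*d)) * (2 * real (N choose d))"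
    unfolding central by (metis of_nat_mult of_nat_numeral)
  moreover have "2*Suc d - 1 = Suc (2*d)" by simp
  ultimately show ?thesis unfolding N_def by (simp add: algebra_simps)
qed

text \<open>\<open>C(2d-1,d)\<close> is at least of order \<open>4\<^sup>d/\<surd>d\<close>; the factor \<open>4d\<cdot>C(2d-1,d)\<^sup>2/16\<^sup>d\<close> increases with \<open>d\<close>
  and equals \<open>75/256\<close> at \<open>d = 3\<close>.\<close>
lemma central_binomial_sq_lower:
  fixes d :: nat
  assumes "d \<ge> 3"
  shows "4 * real d * (real ((2*d-1) choose d))^2 \<ge> (75/256) * 16^d"
  using assms
proof (induction d rule: dec_induct)
  case base
  have "((2*3-1) choose 3) = (10::nat)" by (simp add: numeral_eq_Suc)
  then show ?case by simp
next
  case (step d)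
  define x where "x = real ((2*d-1) choose d)"
  define y where "y = real ((2*Suc d-1) choose Suc d)"
  define s where "s = real (Suc d)"
  define a where "a = 2 * real d + 1"
  have rec: "s * y = 2 * a * x"
    using central_binomial_step[of d] step(1) unfolding x_def y_def a_def s_def by simp
  have "(4 * s * y^2) * s = 4 * (s * y) * (s * y)" by (simp add: power2_eq_square algebra_simps)
  also have "\<dots> = 16 * (a * a) * (x * x)" unfolding rec by (simp add: algebra_simps)
  finally have sq: "(4 * s * y^2) * s = 16 * (a * a) * (x * x)" .
  have "16 * (4 * real d * s) * (x * x) \<le> 16 * (a * a) * (x * x)"
    unfolding a_def s_def by (intro mult_right_mono mult_left_mono) (auto simp: algebra_simps)
  then have "(16 * (4 * real d * x^2)) * s \<le> (4 * s * y^2) * s"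
    unfolding sq by (simp add: power2_eq_square algebra_simps)
  then have "16 * (4 * real d * x^2) \<le> 4 * s * y^2" unfolding s_def by simp
  moreover have "16 * (4 * real d * x^2) \<ge> 16 * ((75/256) * 16^d)" using step(3) unfolding x_def by simp
  ultimately show ?case unfolding y_def s_def by simp
qed

text \<open>The mean absolute deviation of a binomial variable with parameters \<open>2d\<close> and \<open>1/2\<close>,
  \<open>E |Bin(2d, 1/2) - d| = 2d\<cdot>C(2d-1, d)/4\<^sup>d\<close>, is of order \<open>\<surd>d\<close>.\<close>
definition binom_mad :: "nat \<Rightarrow> real" where
  "binom_mad d = 2 * real d * real ((2*d-1) choose d) / 4^d"

lemma binom_mad_lower:
  fixes d :: nat
  assumes "d \<ge> 3"
  shows "binom_mad d \<ge> (27/50) * sqrt (real d)"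
proof -
  define e where "e = real ((2*d-1) choose d)"
  have nonneg: "binom_mad d \<ge> 0" unfolding binom_mad_def by simp
  have "(binom_mad d)^2 = real d * (4 * real d * e^2) / 16^d"
    unfolding binom_mad_def e_def by (simp add: power2_eq_square power_mult_distrib[symmetric] algebra_simps)
  also have "\<dots> \<ge> real d * ((75/256) * 16^d) / 16^d"
    using central_binomial_sq_lower[OF assms] unfolding e_def
    by (intro divide_right_mono mult_left_mono) auto
  finally have "(binom_mad d)^2 \<ge> (75/256) * real d" by simp
  moreover have "((27/50) * sqrt (real d))^2 = (729/2500) * real d"
    unfolding power_mult_distrib by (simp add: power2_eq_square)
  ultimately have "((27/50) * sqrt (real d))^2 \<le> (binom_mad d)^2" by linarith
  then show ?thesis using nonneg by (rule power2_le_imp_le)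
qed

lemma cluster_modularity_empty [simp]: "cluster_modularity V E {} = 0"
  by (simp add: cluster_modularity_def)

text \<open>There are only finitely many clusterings of a finite set, so \<open>OPT\<close> is attained and bounds
  every clustering.\<close>
lemma modularity_le_OPT:
  assumes "finite V" and "is_clustering V S"
  shows "modularity V E S \<le> OPT V E"
proof -
  have "{S. is_clustering V S} \<subseteq> Pow (Pow V)" by (auto simp: is_clustering_def)
  then have "finite {S. is_clustering V S}" using assms(1) by (meson finite_Pow_iff finite_subset)
  then show ?thesis unfolding OPT_def using assms(2) by simp
qed

lemma bipartition_clustering:
  assumes "V \<noteq> {}" and "A \<subseteq> V"
  obtains S where "is_clustering V S"
    and "modularity V E S = cluster_modularity V E A + cluster_modularity V E (V - A)"
proof (cases "A = {} \<or> A = V")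
  case True
  have "is_clustering V {V}" using assms(1) by (simp add: is_clustering_def)
  moreover have "modularity V E {V} = cluster_modularity V E A + cluster_modularity V E (V - A)"
    using True by (auto simp: modularity_def)
  ultimately show ?thesis using that by blast
next
  case False
  then have "is_clustering V {A, V - A}" using assms(2) by (auto simp: is_clustering_def)
  moreover have "modularity V E {A, V - A} = cluster_modularity V E A + cluster_modularity V E (V - A)"
  proof -
    have "A \<noteq> V - A" using False by blast
    then show ?thesis by (simp add: modularity_def)
  qed
  ultimately show ?thesis using that by blast
qed

lemma clustering_with_singletons:
  assumes "finite V" and "disjoint \<C>" and "{} \<notin> \<C>" and "\<Union>\<C> \<subseteq> V"
  defines "S \<equiv> \<C> \<union> (\<lambda>w. {w}) ` (V - \<Union>\<C>)"
  shows "is_clustering V S"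
    and "modularity V E S =
           (\<Sum>C\<in>\<C>. cluster_modularity V E C) + (\<Sum>w\<in>V - \<Union>\<C>. cluster_modularity V E {w})"
proof -
  show "is_clustering V S"
    using assms unfolding is_clustering_def S_def disjoint_def disjnt_def by auto
  have "finite \<C>" using assms(1,4) by (meson Sup_le_iff finite_Pow_iff finite_subset subsetI PowI)
  moreover have "\<C> \<inter> (\<lambda>w. {w}) ` (V - \<Union>\<C>) = {}" by blast
  ultimately have "modularity V E S = (\<Sum>C\<in>\<C>. cluster_modularity V E C)
      + (\<Sum>C\<in>(\<lambda>w. {w}) ` (V - \<Union>\<C>). cluster_modularity V E C)"
    unfolding modularity_def S_def using assms(1) by (simp add: sum.union_disjoint)
  then show "modularity V E S =
      (\<Sum>C\<in>\<C>. cluster_modularity V E C) + (\<Sum>w\<in>V - \<Union>\<C>. cluster_modularity V E {w})"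
    by (simp add: sum.reindex)
qed

locale regular_graph =
  fixes V :: "'a set" and E :: "'a \<Rightarrow> 'a \<Rightarrow> bool" and d n :: nat
  assumes simple: "simple_graph V E" and regular: "regular V E d"
    and nonempty: "V \<noteq> {}" and degree_pos: "d > 0" and card_V: "card V = n"
begin

definition nbhd :: "'a \<Rightarrow> 'a set" where "nbhd u = {w\<in>V. E u w}"

lemma finite_V: "finite V" using simple by (simp add: simple_graph_def)
lemma E_sym: "E u v \<Longrightarrow> E v u" using simple by (simp add: simple_graph_def)
lemma E_irrefl: "\<not> E u u" using simple by (simp add: simple_graph_def)
lemma E_in_V: "E u v \<Longrightarrow> u \<in> V \<and> v \<in> V" using simple by (simp add: simple_graph_def)
lemma n_pos: "n > 0" using finite_V nonempty card_V by auto

lemma finite_nbhd: "finite (nbhd u)" using finite_V by (simp add: nbhd_def)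
lemma nbhd_subset: "nbhd u \<subseteq> V" by (auto simp: nbhd_def)
lemma not_in_own_nbhd: "u \<notin> nbhd u" using E_irrefl by (simp add: nbhd_def)
lemma card_nbhd: "u \<in> V \<Longrightarrow> card (nbhd u) = d"
  using regular by (simp add: regular_def degree_def nbhd_def)
lemma degree_eq: "u \<in> V \<Longrightarrow> degree V E u = d"
  using regular by (simp add: regular_def)

lemma adj_sym: "adj E u v = adj E v u" using E_sym by (auto simp: adj_def)

lemma adj_row_sum: "u \<in> V \<Longrightarrow> (\<Sum>v\<in>V. adj E u v) = real d"
proof -
  assume u: "u \<in> V"
  have "(\<Sum>v\<in>V. adj E u v) = (\<Sum>v\<in>V. if v \<in> nbhd u then 1 else 0)"
    by (rule sum.cong) (auto simp: adj_def nbhd_def)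
  also have "\<dots> = real (card (nbhd u))"
    using finite_V nbhd_subset by (simp add: sum.If_cases Int_absorb1)
  finally show ?thesis using card_nbhd[OF u] by simp
qed

text \<open>Handshake lemma: every vertex lies on \<open>d\<close> edges, every edge has two ends.\<close>
lemma handshake: "2 * num_edges V E = d * n"
proof -
  define P where "P = Sigma V nbhd"
  define Ed where "Ed = {{u, v} | u v. u \<in> V \<and> v \<in> V \<and> E u v}"
  define g where "g = (\<lambda>(u::'a,v::'a). {u,v})"
  have finP: "finite P" unfolding P_def using finite_V finite_nbhd by auto
  have cP: "card P = d * n"
    unfolding P_def using finite_V finite_nbhd card_nbhd card_V by simp
  have gP: "g ` P \<subseteq> Ed" unfolding P_def Ed_def g_def nbhd_def by auto
  have finEd: "finite Ed"
    using finite_V by (rule rev_finite_subset[OF finite_Pow_iff[THEN iffD2]]) (auto simp: Ed_def)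
  have "real (card P) = (\<Sum>e\<in>Ed. \<Sum>p\<in>{p\<in>P. g p = e}. 1)"
    using sum.group[OF finP finEd gP, of "\<lambda>_. (1::real)"] by simp
  also have "\<dots> = (\<Sum>e\<in>Ed. 2)"
  proof (rule sum.cong)
    fix e assume "e \<in> Ed"
    then obtain a b where e: "e = {a,b}" "a \<in> V" "b \<in> V" "E a b" unfolding Ed_def by auto
    have "a \<noteq> b" using e E_irrefl by auto
    moreover have "{p\<in>P. g p = e} = {(a,b),(b,a)}"
      using e E_sym unfolding P_def g_def nbhd_def by (auto simp: doubleton_eq_iff)
    ultimately show "(\<Sum>p\<in>{p\<in>P. g p = e}. 1::real) = 2" by simp
  qed simp
  finally have "real (card P) = 2 * real (card Ed)" by simp
  then show ?thesis using cP unfolding num_edges_def Ed_def by linarith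
qed

text \<open>For a \<open>d\<close>-regular graph, \<open>2m = dn\<close> and all degree products equal \<open>d\<^sup>2\<close>, so the modularity
  matrix is \<open>adj - d/n\<close>.\<close>
lemma cluster_modularity_regular:
  assumes "C \<subseteq> V"
  shows "cluster_modularity V E C = (\<Sum>u\<in>C. \<Sum>v\<in>C. adj E u v - real d / real n) / (real d * real n)"
proof -
  have m: "2 * real (num_edges V E) = real d * real n"
    using handshake by (metis of_nat_mult of_nat_numeral)
  have "cluster_modularity V E C = (1 / (real d * real n)) *
      (\<Sum>u\<in>C. \<Sum>v\<in>C. adj E u v - real d * real d / (real d * real n))"
    unfolding cluster_modularity_def Let_def m
    using assms degree_eq by (intro arg_cong2[where f="(*)"] sum.cong) (auto simp: subsetD)
  then show ?thesis using degree_pos by simp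
qed

lemma cluster_modularity_by_size:
  assumes "C \<subseteq> V"
  shows "cluster_modularity V E C =
           (\<Sum>u\<in>C. \<Sum>v\<in>C. adj E u v) / (real d * real n) - (real (card C))^2 / (real n)^2"
proof -
  have "(\<Sum>u\<in>C. \<Sum>v\<in>C. adj E u v - real d / real n) =
      (\<Sum>u\<in>C. \<Sum>v\<in>C. adj E u v) - real (card C) * real (card C) * (real d / real n)"
    by (simp add: sum_subtractf)
  moreover have "real (card C) * real (card C) * (real d / real n) / (real d * real n) =
      (real (card C))^2 / (real n)^2"
    using degree_pos n_pos by (simp add: power2_eq_square)
  ultimately show ?thesis using cluster_modularity_regular[OF assms] by (simp add: diff_divide_distrib)
qed

subsection \<open>Maximum star packings\<close>

definition star :: "'a \<times> 'a set \<Rightarrow> bool" where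
  "star p \<longleftrightarrow> fst p \<in> V \<and> snd p \<subseteq> nbhd (fst p) \<and> snd p \<noteq> {} \<and> card (snd p) \<le> 3"

definition star_set :: "'a \<times> 'a set \<Rightarrow> 'a set" where
  "star_set p = insert (fst p) (snd p)"

definition star_packing :: "('a \<times> 'a set) set \<Rightarrow> bool" where
  "star_packing S \<longleftrightarrow> (\<forall>p\<in>S. star p) \<and> disjoint_family_on star_set S"

definition covered :: "('a \<times> 'a set) set \<Rightarrow> 'a set" where
  "covered S = (\<Union>p\<in>S. star_set p)"

definition maximum_packing :: "('a \<times> 'a set) set \<Rightarrow> bool" where
  "maximum_packing S \<longleftrightarrow> star_packing S \<and>
     (\<forall>S'. star_packing S' \<longrightarrow> card (covered S') \<le> card (covered S))"

lemma star_D: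
  assumes "star (c, L)"
  shows "c \<in> V" "L \<subseteq> V" "c \<notin> L" "finite L" "\<And>x. x \<in> L \<Longrightarrow> E c x"
  using assms finite_nbhd[of c] not_in_own_nbhd[of c] nbhd_subset[of c]
  by (auto simp: star_def nbhd_def intro: finite_subset)

lemma star_set_subset: "star p \<Longrightarrow> star_set p \<subseteq> V"
  by (cases p) (auto simp: star_set_def dest: star_D)

lemma finite_star_set: "star p \<Longrightarrow> finite (star_set p)"
  using finite_V star_set_subset finite_subset by blast

lemma card_star_set: "star p \<Longrightarrow> card (star_set p) = card (snd p) + 1"
proof -
  assume "star p"
  moreover obtain c L where "p = (c, L)" by fastforce
  ultimately show ?thesis using star_D[of c L] by (simp add: star_set_def)
qed

lemma star_packingD:
  assumes "star_packing S"
  shows "p \<in> S \<Longrightarrow> star p"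
    and "p \<in> S \<Longrightarrow> q \<in> S \<Longrightarrow> p \<noteq> q \<Longrightarrow> star_set p \<inter> star_set q = {}"
  using assms unfolding star_packing_def disjoint_family_on_def by blast+

lemma finite_star_packing: "star_packing S \<Longrightarrow> finite S"
proof -
  assume "star_packing S"
  then have "S \<subseteq> V \<times> Pow V" by (auto dest!: star_packingD(1) star_set_subset simp: star_set_def)
  then show "finite S" by (rule finite_subset) (simp add: finite_V)
qed

lemma covered_subset: "star_packing S \<Longrightarrow> covered S \<subseteq> V"
  by (auto simp: covered_def dest!: star_packingD(1) star_set_subset)

lemma finite_covered: "star_packing S \<Longrightarrow> finite (covered S)"
  using covered_subset finite_V finite_subset by blast

lemma card_covered: "star_packing S \<Longrightarrow> card (covered S) = (\<Sum>p\<in>S. card (snd p) + 1)"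
proof -
  assume S: "star_packing S"
  have "card (covered S) = (\<Sum>p\<in>S. card (star_set p))" unfolding covered_def
    using finite_star_packing[OF S] star_packingD[OF S] finite_star_set
    by (intro card_UN_disjoint) auto
  also have "\<dots> = (\<Sum>p\<in>S. card (snd p) + 1)"
    using card_star_set star_packingD(1)[OF S] by (intro sum.cong) auto
  finally show ?thesis .
qed

text \<open>Exchange argument: replacing the stars \<open>R\<close> of a packing by new stars \<open>Q\<close>, which use only
  the vertices of \<open>R\<close> and previously uncovered ones and additionally cover the uncovered \<open>w\<close>,
  yields a packing covering more vertices; so this is impossible for a maximum packing.\<close>
lemma exchange_contradicts_maximum:
  assumes max: "maximum_packing S" and R: "R \<subseteq> S"
    and Q: "\<forall>q\<in>Q. star q" "disjoint_family_on star_set Q"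
    and new: "covered Q \<subseteq> covered R \<union> W" "W \<inter> covered S = {}"
    and gain: "covered R \<union> {w} \<subseteq> covered Q" "w \<notin> covered S"
  shows False
proof -
  have S: "star_packing S" using max by (simp add: maximum_packing_def)
  have apart: "star_set a \<inter> star_set b = {}" if "a \<in> Q" "b \<in> S - R" for a b
  proof -
    have "star_set b \<inter> star_set r = {}" if "r \<in> R" for r
      using star_packingD(2)[OF S] \<open>b \<in> S - R\<close> that R by blast
    then show ?thesis using new \<open>a \<in> Q\<close> \<open>b \<in> S - R\<close> unfolding covered_def by blast
  qed
  have S': "star_packing (Q \<union> (S - R))"
    unfolding star_packing_def disjoint_family_on_def
  proof (intro conjI ballI impI)
    show "star p" if "p \<in> Q \<union> (S - R)" for p using that Q(1) star_packingD(1)[OF S] by blast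
    fix p q assume "p \<in> Q \<union> (S - R)" "q \<in> Q \<union> (S - R)" "p \<noteq> q"
    then show "star_set p \<inter> star_set q = {}"
      using Q(2) star_packingD(2)[OF S] apart[of p q] apart[of q p]
      unfolding disjoint_family_on_def by blast
  qed
  have "covered S \<union> {w} \<subseteq> covered (Q \<union> (S - R))"
    using gain(1) R unfolding covered_def by blast
  then have "card (covered S) < card (covered (Q \<union> (S - R)))"
    using gain(2) finite_covered[OF S'] by (intro psubset_card_mono) auto
  moreover have "card (covered (Q \<union> (S - R))) \<le> card (covered S)"
    using max S' by (simp add: maximum_packing_def)
  ultimately show False by simp
qed

text \<open>A maximum packing exists since the number of covered vertices is bounded by \<open>n\<close>.\<close>
lemma maximum_packing_exists: "\<exists>S. maximum_packing S"
proof -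
  have "star_packing {}" by (simp add: star_packing_def disjoint_family_on_def)
  moreover have "\<forall>S. star_packing S \<longrightarrow> card (covered S) < Suc n"
    using covered_subset card_mono[OF finite_V] card_V by (simp add: less_Suc_eq_le)
  ultimately show ?thesis unfolding maximum_packing_def
    by (rule Lattices_Big.ex_has_greatest_nat)
qed

lemma uncovered_nbr_covered:
  assumes max: "maximum_packing S" and w: "w \<notin> covered S" and wx: "E w x"
  shows "x \<in> covered S"
proof (rule ccontr)
  assume x: "x \<notin> covered S"
  have "star (w, {x})" using wx E_in_V by (simp add: star_def nbhd_def)
  then show False
    by (intro exchange_contradicts_maximum[OF max, of "{}" "{(w, {x})}" "{w, x}" w])
       (use w x in \<open>auto simp: covered_def star_set_def disjoint_family_on_def\<close>)
qed

text \<open>... it is not a leaf (otherwise the leaf could be moved to a new star with centre \<open>x\<close>), ...\<close>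
lemma uncovered_nbr_not_leaf:
  assumes max: "maximum_packing S" and w: "w \<notin> covered S" and wx: "E w x"
    and p: "(c, L) \<in> S"
  shows "x \<notin> L"
proof
  assume xL: "x \<in> L"
  have "star (c, L)" using max p by (auto simp: maximum_packing_def dest: star_packingD(1))
  note cL = star_D[OF this] and cL' = this[unfolded star_def, simplified]
  have wcL: "w \<notin> insert c L" using w p unfolding covered_def star_set_def by force
  have x: "x \<in> V" "E x w" "E x c" "x \<noteq> w" "x \<noteq> c"
    using wx E_in_V E_sym E_irrefl cL(5)[OF xL] cL(3) xL by blast+
  have w_V: "w \<in> V" using wx E_in_V by blast
  have R: "covered {(c, L)} = insert c L" by (simp add: covered_def star_set_def)
  show False
  proof (cases "L = {x}")
    case True  (* re-centre the single edge \<open>cx\<close> at \<open>x\<close> and add \<open>w\<close> as a leaf *)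
    have "star (x, {c, w})" using x w_V cL(1) by (simp add: star_def nbhd_def card_insert_if)
    then show False
      by (intro exchange_contradicts_maximum[OF max, of "{(c, L)}" "{(x, {c, w})}" "{w}" w])
         (use p w True in \<open>auto simp: R covered_def star_set_def disjoint_family_on_def\<close>)
  next
    case False  (* move the leaf \<open>x\<close> into a new star with centre \<open>x\<close> and leaf \<open>w\<close> *)
    have "L - {x} \<noteq> {}" using False xL by blast
    moreover have "card (L - {x}) \<le> 3" using cL' by (meson card_Diff1_le le_trans)
    ultimately have "star (c, L - {x})" using cL' by (auto simp: star_def)
    moreover have "star (x, {w})" using x w_V by (simp add: star_def nbhd_def)
    ultimately show False
      by (intro exchange_contradicts_maximum[OF max, of "{(c, L)}" "{(c, L - {x}), (x, {w})}" "{w}" w])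
         (use p w wcL xL x in \<open>auto simp: R covered_def star_set_def disjoint_family_on_def\<close>)
  qed
qed

lemma uncovered_nbr_full_centre:
  assumes max: "maximum_packing S" and w: "w \<notin> covered S" and wx: "E w x"
  obtains L where "(x, L) \<in> S" and "card L = 3"
proof -
  obtain c L where p: "(c, L) \<in> S" and "x \<in> insert c L"
    using uncovered_nbr_covered[OF assms] unfolding covered_def star_set_def by force
  then have c: "c = x" using uncovered_nbr_not_leaf[OF assms p] by blast
  have "star (c, L)" using max p by (auto simp: maximum_packing_def dest: star_packingD(1))
  note cL = this[unfolded star_def, simplified] and finL = star_D(4)[OF this]
  have wcL: "w \<notin> insert c L" using w p unfolding covered_def star_set_def by force
  have "card L = 3"  (* otherwise \<open>w\<close> could be added as a further leaf *)
  proof (rule ccontr)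
    assume "card L \<noteq> 3"
    then have "card (insert w L) \<le> 3" using cL finL by (simp add: card_insert_if)
    then have "star (c, insert w L)"
      using cL c wx E_sym E_in_V by (auto simp: star_def nbhd_def)
    then show False
      by (intro exchange_contradicts_maximum[OF max, of "{(c, L)}" "{(c, insert w L)}" "{w}" w])
         (use p w wcL in \<open>auto simp: covered_def star_set_def disjoint_family_on_def\<close>)
  qed
  then show ?thesis using that p c by blast
qed

text \<open>Double counting the edges leaving uncovered vertices: they all end in centres of full stars,
  each of which has degree \<open>d\<close>; so there are at most as many uncovered vertices as full stars.\<close>
lemma uncovered_le_full_stars:
  assumes max: "maximum_packing S"
  shows "card (V - covered S) \<le> card {p\<in>S. card (snd p) = 3}"
proof -
  define W where "W = V - covered S"
  define K where "K = {p\<in>S. card (snd p) = 3}"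
  have finW: "finite W" using finite_V by (simp add: W_def)
  have finK: "finite K"
    using max finite_star_packing by (simp add: K_def maximum_packing_def)
  have "(\<lambda>(w, c). (c, w)) ` Sigma W nbhd \<subseteq> Sigma (fst ` K) nbhd"
  proof clarify
    fix w c assume "w \<in> W" "c \<in> nbhd w"
    then obtain L where "(c, L) \<in> S" "card L = 3"
      using uncovered_nbr_full_centre[OF max] by (auto simp: W_def nbhd_def)
    then show "c \<in> fst ` K \<and> w \<in> nbhd c"
      using \<open>w \<in> W\<close> \<open>c \<in> nbhd w\<close> E_sym by (force simp: K_def W_def nbhd_def)
  qed
  then have "card ((\<lambda>(w, c). (c, w)) ` Sigma W nbhd) \<le> card (Sigma (fst ` K) nbhd)"
    using finK finite_nbhd by (intro card_mono) auto
  moreover have "card ((\<lambda>(w, c). (c, w)) ` Sigma W nbhd) = d * card W"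
    using finW finite_nbhd card_nbhd by (subst card_image) (auto simp: inj_on_def W_def)
  moreover have "card (Sigma (fst ` K) nbhd) = d * card (fst ` K)"
  proof -
    have "fst ` K \<subseteq> V"
      using max by (auto simp: K_def maximum_packing_def star_def dest: star_packingD(1))
    then have "(\<Sum>c\<in>fst ` K. card (nbhd c)) = (\<Sum>c\<in>fst ` K. d)"
      using card_nbhd by (intro sum.cong) auto
    then show ?thesis using finK finite_nbhd by simp
  qed
  moreover have "card (fst ` K) \<le> card K" using finK by (rule card_image_le)
  ultimately have "d * card W \<le> d * card K" by (metis le_trans mult_le_mono2)
  then show ?thesis using degree_pos by (simp add: W_def K_def)
qed

text \<open>A maximum packing has at least \<open>n/2\<close> leaves: its uncovered vertices are paid for by full
  stars, and each star with \<open>k\<close> leaves covers \<open>k + 1 \<le> 2k\<close> vertices, with slack for \<open>k = 3\<close>.\<close>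
lemma maximum_packing_leaves:
  assumes max: "maximum_packing S"
  shows "n \<le> 2 * (\<Sum>p\<in>S. card (snd p))"
proof -
  have S: "star_packing S" using max by (simp add: maximum_packing_def)
  have "n = card (covered S) + card (V - covered S)"
    using covered_subset[OF S] finite_covered[OF S] finite_V card_V
    by (metis card_Diff_subset card_mono le_add_diff_inverse)
  also have "\<dots> \<le> (\<Sum>p\<in>S. card (snd p) + 1) + (\<Sum>p\<in>S. if card (snd p) = 3 then 1 else 0)"
    using uncovered_le_full_stars[OF max] finite_star_packing[OF S]
    by (simp add: card_covered[OF S] sum.If_cases Int_def)
  also have "\<dots> = (\<Sum>p\<in>S. (card (snd p) + 1) + (if card (snd p) = 3 then 1 else 0))"
    by (rule sum.distrib[symmetric])
  also have "\<dots> \<le> (\<Sum>p\<in>S. 2 * card (snd p))"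
  proof (rule sum_mono)
    fix p assume "p \<in> S"
    then have "star p" using star_packingD(1)[OF S] by blast
    then have "finite (snd p)" "snd p \<noteq> {}" "card (snd p) \<le> 3"
      using finite_nbhd finite_subset by (auto simp: star_def)
    then have "card (snd p) \<noteq> 0" "card (snd p) \<le> 3" by simp_all
    then show "(card (snd p) + 1) + (if card (snd p) = 3 then 1 else 0) \<le> 2 * card (snd p)" by auto
  qed
  finally show ?thesis by (simp add: sum_distrib_left)
qed

text \<open>A star with \<open>k\<close> leaves spans \<open>k\<close> edges, i.e. \<open>2k\<close> ordered adjacent pairs.\<close>
lemma star_adj_sum:
  assumes "star p"
  shows "(\<Sum>u\<in>star_set p. \<Sum>v\<in>star_set p. adj E u v) \<ge> 2 * real (card (snd p))"
proof -
  obtain c L where p: "p = (c, L)" by fastforce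
  note cL = star_D[OF assms[unfolded p]]
  have nonneg: "adj E u v \<ge> 0" for u v by (simp add: adj_def)
  have centre_row: "(\<Sum>v\<in>insert c L. adj E c v) = real (card L)"
    using cL E_irrefl by (simp add: adj_def)
  have leaf_row: "(\<Sum>v\<in>insert c L. adj E u v) \<ge> 1" if "u \<in> L" for u
  proof -
    have "adj E u c = 1" using cL(5)[OF that] E_sym by (simp add: adj_def)
    moreover have "adj E u c \<le> (\<Sum>v\<in>insert c L. adj E u v)"
      using cL(4) nonneg by (intro member_le_sum) auto
    ultimately show ?thesis by simp
  qed
  have "(\<Sum>u\<in>insert c L. \<Sum>v\<in>insert c L. adj E u v) =
      real (card L) + (\<Sum>u\<in>L. \<Sum>v\<in>insert c L. adj E u v)"
    using cL centre_row by simp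
  moreover have "(\<Sum>u\<in>L. \<Sum>v\<in>insert c L. adj E u v) \<ge> (\<Sum>u\<in>L. 1)"
    using leaf_row by (rule sum_mono)
  ultimately show ?thesis by (simp add: p star_set_def)
qed

lemma star_cluster_modularity:
  assumes p: "star p"
  defines "k \<equiv> real (card (snd p))"
  shows "cluster_modularity V E (star_set p) \<ge> 2 * k / (real d * real n) - 4 * (k + 1) / (real n)^2"
proof -
  have size: "real (card (star_set p)) = k + 1" "k \<le> 3" "k \<ge> 0"
    using card_star_set[OF p] p by (simp_all add: k_def star_def)
  have "(real (card (star_set p)))^2 \<le> 4 * (k + 1)"
    unfolding size(1) power2_eq_square using size(2,3) by (intro mult_right_mono) auto
  then have "(real (card (star_set p)))^2 / (real n)^2 \<le> 4 * (k + 1) / (real n)^2"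
    by (simp add: divide_right_mono)
  moreover have "(\<Sum>u\<in>star_set p. \<Sum>v\<in>star_set p. adj E u v) / (real d * real n) \<ge> 2 * k / (real d * real n)"
    using star_adj_sum[OF p] by (simp add: k_def divide_right_mono)
  ultimately show ?thesis
    using cluster_modularity_by_size[OF star_set_subset[OF p]] by linarith
qed

lemma singleton_modularity: "w \<in> V \<Longrightarrow> cluster_modularity V E {w} = - 1 / (real n)^2"
  using cluster_modularity_by_size[of "{w}"] E_irrefl by (simp add: adj_def)

text \<open>Clustering along a star packing, with singletons for the uncovered vertices: the squared
  cluster sizes add up to at most \<open>4n\<close>.\<close>
lemma star_clustering_modularity:
  assumes S: "star_packing S"
  defines "\<S> \<equiv> star_set ` S \<union> (\<lambda>w. {w}) ` (V - covered S)"
  shows "is_clustering V \<S>"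
    and "modularity V E \<S> \<ge> 2 / (real d * real n) * (\<Sum>p\<in>S. real (card (snd p))) - 4 / real n"
proof -
  define W where "W = V - covered S"
  define k :: "'a \<times> 'a set \<Rightarrow> real" where "k p = real (card (snd p))" for p
  have stars: "star p" if "p \<in> S" for p using star_packingD(1)[OF S that] .
  have inj: "inj_on star_set S"
    unfolding inj_on_def using star_packingD(2)[OF S] by (metis Int_absorb insert_not_empty star_set_def)
  have disj: "disjoint (star_set ` S)"
    using S by (simp add: star_packing_def disjoint_family_on_disjoint_image)
  have ne: "{} \<notin> star_set ` S" and sub: "\<Union>(star_set ` S) \<subseteq> V"
    using covered_subset[OF S] by (auto simp: covered_def star_set_def)
  note clustering = clustering_with_singletons[OF finite_V disj ne sub]
  then show "is_clustering V \<S>" by (simp add: \<S>_def covered_def)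
  have "modularity V E \<S> =
      (\<Sum>p\<in>S. cluster_modularity V E (star_set p)) + (\<Sum>w\<in>W. cluster_modularity V E {w})"
    using clustering(2) inj by (simp add: \<S>_def W_def covered_def sum.reindex)
  also have "\<dots> \<ge> (\<Sum>p\<in>S. 2 * k p / (real d * real n) - 4 * (k p + 1) / (real n)^2)
      + (\<Sum>w\<in>W. - 4 / (real n)^2)"
    using stars star_cluster_modularity singleton_modularity
    by (intro add_mono sum_mono) (auto simp: k_def W_def divide_right_mono)
  also have "(\<Sum>p\<in>S. 2 * k p / (real d * real n) - 4 * (k p + 1) / (real n)^2)
      + (\<Sum>w\<in>W. - 4 / (real n)^2) =
      2 / (real d * real n) * (\<Sum>p\<in>S. k p) - 4 / (real n)^2 * ((\<Sum>p\<in>S. k p + 1) + real (card W))"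
  proof -
    have "(\<Sum>p\<in>S. 2 * k p / (real d * real n)) = 2 / (real d * real n) * (\<Sum>p\<in>S. k p)"
      "(\<Sum>p\<in>S. 4 * (k p + 1) / (real n)^2) = 4 / (real n)^2 * (\<Sum>p\<in>S. k p + 1)"
      by (simp_all add: sum_distrib_left)
    then show ?thesis by (simp add: sum_subtractf algebra_simps add_divide_distrib)
  qed
  also have "(\<Sum>p\<in>S. k p + 1) + real (card W) = real n"
  proof -
    have "n = card (covered S) + card W"
      using covered_subset[OF S] finite_covered[OF S] finite_V card_V
      by (metis W_def card_Diff_subset card_mono le_add_diff_inverse)
    then show ?thesis using card_covered[OF S] by (simp add: k_def add.commute)
  qed
  also have "4 / (real n)^2 * real n = 4 / real n" by (simp add: power2_eq_square)
  finally show "modularity V E \<S> \<ge> 2 / (real d * real n) * (\<Sum>p\<in>S. real (card (snd p))) - 4 / real n"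
    by (simp add: k_def)
qed

text \<open>First bound: a maximum star packing has at least \<open>n/2\<close> leaves.\<close>
theorem OPT_ge_star_packing: "OPT V E \<ge> 1 / real d - 4 / real n"
proof -
  obtain S where max: "maximum_packing S" using maximum_packing_exists by blast
  then have S: "star_packing S" by (simp add: maximum_packing_def)
  have "real n \<le> 2 * (\<Sum>p\<in>S. real (card (snd p)))"
    using maximum_packing_leaves[OF max] by (metis of_nat_le_iff of_nat_mult of_nat_numeral of_nat_sum)
  then have "2 / (real d * real n) * (real n / 2) \<le> 2 / (real d * real n) * (\<Sum>p\<in>S. real (card (snd p)))"
    by (intro mult_left_mono) auto
  then have "1 / real d \<le> 2 / (real d * real n) * (\<Sum>p\<in>S. real (card (snd p)))"
    using n_pos by simp
  then show ?thesis
    using star_clustering_modularity[OF S] modularity_le_OPT[OF finite_V, where E=E] by fastforce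
qed

end

subsection \<open>Sums over all subsets\<close>

lemma sum_Pow_sym_diff:
  assumes "F \<subseteq> \<Omega>"
  shows "(\<Sum>X\<in>Pow \<Omega>. g (sym_diff X F)) = (\<Sum>X\<in>Pow \<Omega>. g X)"
  by (rule sum.reindex_bij_witness[of _ "\<lambda>X. sym_diff X F" "\<lambda>X. sym_diff X F"]) (use assms in auto)

lemma sum_Pow_odd:
  fixes g :: "'a set \<Rightarrow> real"
  assumes "F \<subseteq> \<Omega>" and "\<And>X. g (sym_diff X F) = - g X"
  shows "(\<Sum>X\<in>Pow \<Omega>. g X) = 0"
proof -
  have "(\<Sum>X\<in>Pow \<Omega>. g X) = (\<Sum>X\<in>Pow \<Omega>. g (sym_diff X F))" by (rule sum_Pow_sym_diff[OF assms(1), symmetric])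
  also have "\<dots> = - (\<Sum>X\<in>Pow \<Omega>. g X)" using assms(2) by (simp add: sum_negf)
  finally show ?thesis by simp
qed

lemma sum_Pow_restrict:
  assumes "finite \<Omega>" and "P \<subseteq> \<Omega>"
  shows "(\<Sum>X\<in>Pow \<Omega>. f (X \<inter> P)) = 2 ^ (card \<Omega> - card P) * (\<Sum>Y\<in>Pow P. f Y :: real)"
proof -
  have "(\<Sum>X\<in>Pow \<Omega>. f (X \<inter> P)) = (\<Sum>(Y,Z)\<in>Pow P \<times> Pow (\<Omega> - P). f Y)"
    by (rule sum.reindex_bij_witness[of _ "\<lambda>(Y,Z). Y \<union> Z" "\<lambda>X. (X \<inter> P, X - P)"])
       (use assms(2) in auto)
  also have "\<dots> = (\<Sum>Y\<in>Pow P. 2 ^ card (\<Omega> - P) * f Y)"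
    using assms(1) by (simp add: sum.cartesian_product[symmetric] card_Pow)
  also have "\<dots> = 2 ^ (card \<Omega> - card P) * (\<Sum>Y\<in>Pow P. f Y)"
    using assms by (simp add: sum_distrib_left card_Diff_subset finite_subset)
  finally show ?thesis .
qed

lemma sum_Pow_card:
  assumes "finite P"
  shows "(\<Sum>Y\<in>Pow P. g (card Y)) = (\<Sum>k=0..card P. real (card P choose k) * g k)"
proof -
  have "(\<Sum>Y\<in>Pow P. g (card Y)) = (\<Sum>k\<in>{0..card P}. \<Sum>Y\<in>{Y. Y \<in> Pow P \<and> card Y = k}. g (card Y))"
    by (rule sum.group[symmetric]) (use assms in \<open>auto simp: card_mono\<close>)
  also have "\<dots> = (\<Sum>k=0..card P. real (card P choose k) * g k)"
  proof (rule sum.cong)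
    fix k
    have "(\<Sum>Y\<in>{Y. Y \<in> Pow P \<and> card Y = k}. g (card Y)) = (\<Sum>Y\<in>{Y. Y \<subseteq> P \<and> card Y = k}. g k)"
      by (intro sum.cong) auto
    then show "(\<Sum>Y\<in>{Y. Y \<in> Pow P \<and> card Y = k}. g (card Y)) = real (card P choose k) * g k"
      using n_subsets[OF assms, of k] by simp
  qed simp
  finally show ?thesis .
qed

lemma sum_swap3:
  "(\<Sum>x\<in>A. \<Sum>y\<in>B. \<Sum>z\<in>C. f x y z) = (\<Sum>y\<in>B. \<Sum>z\<in>C. \<Sum>x\<in>A. f x y z)"
  by (subst sum.swap) (intro sum.cong refl, rule sum.swap)

lemma double_sum_Un:
  fixes f :: "'a \<Rightarrow> 'a \<Rightarrow> real"
  assumes "finite A" "finite B" "A \<inter> B = {}"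
  shows "(\<Sum>u\<in>A \<union> B. \<Sum>v\<in>A \<union> B. f u v) =
    (\<Sum>u\<in>A. \<Sum>v\<in>A. f u v) + (\<Sum>u\<in>A. \<Sum>v\<in>B. f u v) + (\<Sum>u\<in>B. \<Sum>v\<in>A. f u v) + (\<Sum>u\<in>B. \<Sum>v\<in>B. f u v)"
  using assms by (simp add: sum.union_disjoint sum.distrib)

subsection \<open>Random signings of the vertices\<close>

definition tie_sign :: "real \<Rightarrow> bool \<Rightarrow> real" where
  "tie_sign t b = (if t > 0 then 1 else if t < 0 then -1 else if b then 1 else -1)"

lemma tie_sign_neg: "tie_sign (- t) (\<not> b) = - tie_sign t b"
  unfolding tie_sign_def by auto

lemma tie_sign_times: "tie_sign t b * t = \<bar>t\<bar>"
  unfolding tie_sign_def by auto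

text \<open>Flipping a private part \<open>a\<close> of the argument: \<open>tie_sign (a + c) b + tie_sign (c - a) (\<not> b)\<close>
  has the sign of the common part \<open>c\<close>; so two such sums sharing \<open>c\<close> have a nonnegative product.\<close>
lemma tie_sign_pair_product_nonneg:
  "(tie_sign (a + c) b + tie_sign (c - a) (\<not> b)) * (tie_sign (a' + c) b' + tie_sign (c - a') (\<not> b')) \<ge> 0"
proof -
  have sign: "(c > 0 \<longrightarrow> tie_sign (x + c) e + tie_sign (c - x) (\<not> e) \<ge> 0) \<and>
      (c < 0 \<longrightarrow> tie_sign (x + c) e + tie_sign (c - x) (\<not> e) \<le> 0) \<and>
      (c = 0 \<longrightarrow> tie_sign (x + c) e + tie_sign (c - x) (\<not> e) = 0)" for x e
    unfolding tie_sign_def by auto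
  consider "c > 0" | "c < 0" | "c = 0" by linarith
  then show ?thesis
    by cases (use sign[of a b] sign[of a' b'] in \<open>auto intro: mult_nonpos_nonpos\<close>)
qed

context regular_graph
begin

text \<open>Every vertex carries two fair coins; an outcome \<open>X \<subseteq> coins\<close> is the set of coins showing heads,
  and sums over \<open>Pow coins\<close> are \<open>2\<^bsup>2n\<^esup>\<close> times expectations.\<close>
definition coins :: "('a \<times> bool) set" where "coins = V \<times> UNIV"

definition coin_sum :: "('a \<times> bool) set \<Rightarrow> 'a \<Rightarrow> real" where
  "coin_sum X u = (if (u, True) \<in> X then 1 else 0) + (if (u, False) \<in> X then 1 else 0) - 1"

definition tied :: "('a \<times> bool) set \<Rightarrow> 'a \<Rightarrow> bool" where
  "tied X u \<longleftrightarrow> ((u, True) \<in> X) \<noteq> ((u, False) \<in> X)"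

definition nbr_sum :: "('a \<times> bool) set \<Rightarrow> 'a \<Rightarrow> real" where
  "nbr_sum X u = (\<Sum>w\<in>nbhd u. coin_sum X w)"

definition spin :: "('a \<times> bool) set \<Rightarrow> 'a \<Rightarrow> real" where
  "spin X u = (if tied X u then tie_sign (nbr_sum X u) ((u, True) \<in> X) else coin_sum X u)"

lemma finite_coins: "finite coins"
  unfolding coins_def using finite_V by simp

lemma card_Pow_coins: "card (Pow coins) = 2 ^ card coins"
  using finite_coins by (simp add: card_Pow)

lemma tied_iff: "tied X u \<longleftrightarrow> coin_sum X u = 0"
  unfolding tied_def coin_sum_def by auto

lemma spin_pm1: "spin X u = 1 \<or> spin X u = -1"
  unfolding spin_def tie_sign_def coin_sum_def tied_def by auto

lemma spin_tied_times_nbr_sum: "tied X u \<Longrightarrow> spin X u * nbr_sum X u = \<bar>nbr_sum X u\<bar>"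
  unfolding spin_def by (simp add: tie_sign_times)

lemma mem_flip: "(w, b) \<in> sym_diff X (W \<times> UNIV) \<longleftrightarrow> ((w, b) \<in> X) \<noteq> (w \<in> W)"
  by auto

lemma coin_sum_flip: "coin_sum (sym_diff X (W \<times> UNIV)) w = (if w \<in> W then - coin_sum X w else coin_sum X w)"
  unfolding coin_sum_def mem_flip by auto

lemma tied_flip: "tied (sym_diff X (W \<times> UNIV)) w = tied X w"
  unfolding tied_def mem_flip by auto

lemma nbr_sum_flip_out: "nbhd u \<inter> W = {} \<Longrightarrow> nbr_sum (sym_diff X (W \<times> UNIV)) u = nbr_sum X u"
  unfolding nbr_sum_def by (intro sum.cong) (auto simp: coin_sum_flip)

lemma nbr_sum_flip_in: "nbhd u \<subseteq> W \<Longrightarrow> nbr_sum (sym_diff X (W \<times> UNIV)) u = - nbr_sum X u"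
  unfolding nbr_sum_def by (simp add: sum_negf[symmetric]) (intro sum.cong, auto simp: coin_sum_flip)

lemma spin_flip_in:
  assumes "insert u (nbhd u) \<subseteq> W"
  shows "spin (sym_diff X (W \<times> UNIV)) u = - spin X u"
  using assms unfolding spin_def
  by (simp add: tied_flip nbr_sum_flip_in coin_sum_flip tie_sign_neg[symmetric])

lemma spin_flip_out:
  assumes "insert u (nbhd u) \<inter> W = {}"
  shows "spin (sym_diff X (W \<times> UNIV)) u = spin X u"
proof -
  have "u \<notin> W" "nbhd u \<inter> W = {}" using assms by blast+
  then show ?thesis unfolding spin_def by (simp add: tied_flip nbr_sum_flip_out coin_sum_flip)
qed

text \<open>Coin sums of distinct vertices are uncorrelated (flip the coins of \<open>u\<close>).\<close>
lemma coin_sums_uncorrelated: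
  assumes "u \<noteq> v" and "u \<in> V"
  shows "(\<Sum>X\<in>Pow coins. coin_sum X u * coin_sum X v) = 0"
  by (rule sum_Pow_odd[where F="{u} \<times> UNIV"]) (use assms in \<open>auto simp: coins_def coin_sum_flip\<close>)

text \<open>Spins of vertices with disjoint closed neighbourhoods are uncorrelated (flip the coins of
  the closed neighbourhood of \<open>v\<close>).\<close>
lemma spins_uncorrelated:
  assumes "v \<in> V" and "insert u (nbhd u) \<inter> insert v (nbhd v) = {}"
  shows "(\<Sum>X\<in>Pow coins. spin X u * spin X v) = 0"
proof (rule sum_Pow_odd[where F="insert v (nbhd v) \<times> UNIV"])
  show "insert v (nbhd v) \<times> UNIV \<subseteq> coins" using assms(1) nbhd_subset by (auto simp: coins_def)
  fix X
  show "spin (sym_diff X (insert v (nbhd v) \<times> UNIV)) u * spin (sym_diff X (insert v (nbhd v) \<times> UNIV)) v =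
      - (spin X u * spin X v)"
    using spin_flip_in[of v "insert v (nbhd v)" X] spin_flip_out[of u "insert v (nbhd v)" X] assms(2)
    by simp
qed

lemma nbr_sum_heads:
  assumes u: "u \<in> V"
  shows "nbr_sum X u = real (card (X \<inter> (nbhd u \<times> UNIV))) - real d"
proof -
  have "real (card (X \<inter> (nbhd u \<times> UNIV))) = (\<Sum>p\<in>nbhd u \<times> UNIV. if p \<in> X then 1 else 0)"
    using finite_nbhd by (simp add: sum.If_cases Int_commute)
  also have "\<dots> = (\<Sum>w\<in>nbhd u. \<Sum>b\<in>UNIV. if (w,b) \<in> X then 1 else 0)"
    by (simp add: sum.cartesian_product)
  also have "\<dots> = (\<Sum>w\<in>nbhd u. coin_sum X w + 1)"
    by (intro sum.cong) (auto simp: coin_sum_def UNIV_bool)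
  also have "\<dots> = nbr_sum X u + real d" using card_nbhd[OF u] by (simp add: nbr_sum_def sum.distrib)
  finally show ?thesis by simp
qed

lemma sum_abs_nbr_sum:
  assumes u: "u \<in> V"
  shows "(\<Sum>X\<in>Pow coins. \<bar>nbr_sum X u\<bar>) = 2 ^ card coins * binom_mad d"
proof -
  define P where "P = nbhd u \<times> (UNIV::bool set)"
  have P: "P \<subseteq> coins" "finite P" "card P = 2 * d"
    unfolding P_def coins_def using nbhd_subset finite_nbhd card_nbhd[OF u]
    by (auto simp: card_cartesian_product)
  have "(\<Sum>X\<in>Pow coins. \<bar>nbr_sum X u\<bar>) = (\<Sum>X\<in>Pow coins. \<bar>real (card (X \<inter> P)) - real d\<bar>)"
    using nbr_sum_heads[OF u] by (simp add: P_def)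
  also have "\<dots> = 2 ^ (card coins - 2 * d) * (\<Sum>k=0..2*d. real (2*d choose k) * \<bar>real k - real d\<bar>)"
    using sum_Pow_restrict[OF finite_coins P(1), of "\<lambda>Y. \<bar>real (card Y) - real d\<bar>"]
      sum_Pow_card[OF P(2), of "\<lambda>k. \<bar>real k - real d\<bar>"] P(3) by simp
  also have "\<dots> = 2 ^ (card coins - 2 * d) * 4 ^ d * binom_mad d"
    using binomial_mean_abs_deviation degree_pos by (simp add: binom_mad_def)
  also have "(2::real) ^ (card coins - 2 * d) * 4 ^ d = 2 ^ card coins"
  proof -
    have "card coins = (card coins - 2 * d) + 2 * d" using card_mono[OF finite_coins P(1)] P(3) by simp
    moreover have "(4::real) ^ d = 2 ^ (2 * d)" by (simp add: power_mult)
    ultimately show ?thesis by (metis power_add)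
  qed
  finally show ?thesis .
qed

text \<open>Flipping one coin of \<open>u\<close> toggles whether \<open>u\<close> is tied without changing its neighbour sum,
  so the tied outcomes carry exactly half of \<open>\<Sum>|nbr_sum X u|\<close>.\<close>
lemma sum_abs_nbr_sum_tied:
  assumes u: "u \<in> V"
  shows "(\<Sum>X\<in>Pow coins. if tied X u then \<bar>nbr_sum X u\<bar> else 0) = 2 ^ card coins * binom_mad d / 2"
proof -
  let ?f = "\<lambda>X. sym_diff X {(u, True)}"
  have flip: "tied (?f X) u = (\<not> tied X u)" "nbr_sum (?f X) u = nbr_sum X u" for X
    using not_in_own_nbhd[of u] unfolding tied_def nbr_sum_def coin_sum_def
    by (auto intro!: sum.cong)
  have "(\<Sum>X\<in>Pow coins. if tied X u then \<bar>nbr_sum X u\<bar> else 0) =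
      (\<Sum>X\<in>Pow coins. if tied (?f X) u then \<bar>nbr_sum (?f X) u\<bar> else 0)"
    using u by (intro sum_Pow_sym_diff[symmetric]) (simp add: coins_def)
  also have "\<dots> = (\<Sum>X\<in>Pow coins. if tied X u then 0 else \<bar>nbr_sum X u\<bar>)"
    by (intro sum.cong refl) (simp only: flip, simp)
  finally have "2 * (\<Sum>X\<in>Pow coins. if tied X u then \<bar>nbr_sum X u\<bar> else 0) =
      (\<Sum>X\<in>Pow coins. (if tied X u then \<bar>nbr_sum X u\<bar> else 0) + (if tied X u then 0 else \<bar>nbr_sum X u\<bar>))"
    by (simp add: sum.distrib)
  also have "\<dots> = (\<Sum>X\<in>Pow coins. \<bar>nbr_sum X u\<bar>)" by (intro sum.cong) auto
  finally show ?thesis using sum_abs_nbr_sum[OF u] by simp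
qed

definition private_flip :: "'a \<Rightarrow> 'a \<Rightarrow> ('a \<times> bool) set \<Rightarrow> ('a \<times> bool) set" where
  "private_flip u v X = sym_diff X (insert u (nbhd u - nbhd v - {v}) \<times> UNIV)"

lemma private_flip_commute: "private_flip u v (private_flip v u X) = private_flip v u (private_flip u v X)"
  unfolding private_flip_def by blast

lemma tied_private_flip: "tied (private_flip u v X) w = tied X w"
  unfolding private_flip_def by (rule tied_flip)

lemma sum_Pow_private_flip:
  "E u v \<Longrightarrow> (\<Sum>X\<in>Pow coins. g (private_flip u v X)) = (\<Sum>X\<in>Pow coins. g X)"
  unfolding private_flip_def using E_in_V nbhd_subset
  by (intro sum_Pow_sym_diff) (auto simp: coins_def)

text \<open>If \<open>v\<close> is tied, it does not contribute to the neighbour sum of its neighbour \<open>u\<close>, which then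
  splits into a private part and a part common with \<open>v\<close>.\<close>
lemma nbr_sum_split:
  assumes uv: "E u v" and v: "tied Z v"
  shows "nbr_sum Z u = (\<Sum>w\<in>nbhd u - nbhd v - {v}. coin_sum Z w) + (\<Sum>w\<in>nbhd u \<inter> nbhd v. coin_sum Z w)"
proof -
  have split: "nbhd u = insert v ((nbhd u - nbhd v - {v}) \<union> (nbhd u \<inter> nbhd v))"
    using uv E_in_V by (auto simp: nbhd_def)
  have notin: "v \<notin> (nbhd u - nbhd v - {v}) \<union> (nbhd u \<inter> nbhd v)"
    using not_in_own_nbhd[of v] by blast
  have fin: "finite (nbhd u - nbhd v - {v})" "finite (nbhd u \<inter> nbhd v)"
    using finite_nbhd by auto
  have "nbr_sum Z u = coin_sum Z v + (\<Sum>w\<in>(nbhd u - nbhd v - {v}) \<union> (nbhd u \<inter> nbhd v). coin_sum Z w)"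
    unfolding nbr_sum_def by (subst split, subst sum.insert) (use fin notin in auto)
  then show ?thesis
    using v fin unfolding tied_iff by (subst (asm) sum.union_disjoint) auto
qed

lemma spin_private_flip_sum:
  assumes uv: "E u v" and u: "tied X u" and v: "tied X v"
  defines "a \<equiv> (\<Sum>w\<in>nbhd u - nbhd v - {v}. coin_sum X w)"
    and "c \<equiv> (\<Sum>w\<in>nbhd u \<inter> nbhd v. coin_sum X w)"
  shows "spin X u + spin (private_flip u v X) u =
    tie_sign (a + c) ((u, True) \<in> X) + tie_sign (c - a) ((u, True) \<notin> X)"
proof -
  let ?Y = "private_flip u v X"
  have "((u, True) \<in> ?Y) = ((u, True) \<notin> X)" by (simp add: private_flip_def)
  moreover have "(\<Sum>w\<in>nbhd u - nbhd v - {v}. coin_sum ?Y w) = - a"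
    unfolding a_def private_flip_def
    by (simp add: sum_negf[symmetric]) (intro sum.cong, auto simp: coin_sum_flip)
  moreover have "(\<Sum>w\<in>nbhd u \<inter> nbhd v. coin_sum ?Y w) = c"
    unfolding c_def private_flip_def using not_in_own_nbhd[of u]
    by (intro sum.cong) (auto simp: coin_sum_flip)
  ultimately show ?thesis
    using u v nbr_sum_split[OF uv v] nbr_sum_split[of u v ?Y] uv
    unfolding spin_def a_def c_def by (simp add: tied_private_flip)
qed

lemma spin_private_flip_other:
  assumes uv: "E u v" and v: "tied Z v"
  shows "spin (private_flip v u Z) u = spin Z u"
proof -
  let ?Y = "private_flip v u Z"
  have u: "u \<notin> insert v (nbhd v - nbhd u - {u})" using uv E_irrefl by auto
  have "(\<Sum>w\<in>nbhd u - nbhd v - {v}. coin_sum ?Y w) = (\<Sum>w\<in>nbhd u - nbhd v - {v}. coin_sum Z w)"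
    unfolding private_flip_def by (intro sum.cong) (auto simp: coin_sum_flip)
  moreover have "(\<Sum>w\<in>nbhd u \<inter> nbhd v. coin_sum ?Y w) = (\<Sum>w\<in>nbhd u \<inter> nbhd v. coin_sum Z w)"
    unfolding private_flip_def using not_in_own_nbhd[of v] by (intro sum.cong) (auto simp: coin_sum_flip)
  moreover have "tied ?Y v" using v by (simp add: tied_private_flip)
  ultimately have "nbr_sum ?Y u = nbr_sum Z u" using nbr_sum_split[OF uv] v by simp
  moreover have "coin_sum ?Y u = coin_sum Z u" "((u, True) \<in> ?Y) = ((u, True) \<in> Z)"
    using u by (simp_all add: private_flip_def coin_sum_flip)
  ultimately show ?thesis unfolding spin_def by (simp add: tied_private_flip)
qed

text \<open>Averaged over the four outcomes obtained by the private flips of \<open>u\<close> and \<open>v\<close>, the product of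
  two adjacent tied spins is nonnegative: it factors as \<open>(spin u + spin' u) (spin v + spin' v)\<close>,
  and both factors have the sign of the common neighbour sum.\<close>
lemma four_flips_nonneg:
  assumes uv: "E u v"
  defines "h \<equiv> \<lambda>X. if tied X u \<and> tied X v then spin X u * spin X v else 0"
  shows "h X + h (private_flip u v X) + h (private_flip v u X) + h (private_flip u v (private_flip v u X)) \<ge> 0"
proof (cases "tied X u \<and> tied X v")
  case False
  then show ?thesis unfolding h_def by (auto simp: tied_private_flip)
next
  case True
  let ?A = "private_flip u v" and ?B = "private_flip v u"
  have vu: "E v u" using E_sym uv .
  have "h X + h (?A X) + h (?B X) + h (?A (?B X)) =
      (spin X u + spin (?A X) u) * (spin X v + spin (?B X) v)"
  proof -
    have "spin (?A X) v = spin X v" "spin (?B X) u = spin X u"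
      using spin_private_flip_other[OF vu] spin_private_flip_other[OF uv] True by simp_all
    moreover have "spin (?A (?B X)) u = spin (?A X) u" "spin (?A (?B X)) v = spin (?B X) v"
      using spin_private_flip_other[OF uv, of "?A X"] spin_private_flip_other[OF vu, of "?B X"] True
      by (simp_all add: private_flip_commute tied_private_flip)
    ultimately show ?thesis unfolding h_def using True by (simp add: tied_private_flip algebra_simps)
  qed
  also have "\<dots> \<ge> 0"
    using spin_private_flip_sum[OF uv] spin_private_flip_sum[OF vu] True
    by (simp add: Int_commute tie_sign_pair_product_nonneg)
  finally show ?thesis .
qed

lemma tied_spins_correlated:
  assumes uv: "E u v"
  shows "(\<Sum>X\<in>Pow coins. if tied X u \<and> tied X v then spin X u * spin X v else 0) \<ge> 0"
proof -
  define h where "h X = (if tied X u \<and> tied X v then spin X u * spin X v else 0)" for X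
  have "4 * sum h (Pow coins) = (\<Sum>X\<in>Pow coins. h X + h (private_flip u v X) + h (private_flip v u X)
      + h (private_flip u v (private_flip v u X)))"
    using sum_Pow_private_flip[OF uv, of h] sum_Pow_private_flip[OF E_sym[OF uv], of h]
      sum_Pow_private_flip[OF E_sym[OF uv], of "\<lambda>X. h (private_flip u v X)"]
      sum_Pow_private_flip[OF uv, of h]
    by (simp add: sum.distrib)
  also have "\<dots> \<ge> 0"
    using four_flips_nonneg[OF uv] unfolding h_def by (intro sum_nonneg) auto
  finally show ?thesis unfolding h_def by simp
qed

definition tied_spin :: "('a \<times> bool) set \<Rightarrow> 'a \<Rightarrow> real" where
  "tied_spin X u = (if tied X u then spin X u else 0)"

lemma spin_split: "spin X u = coin_sum X u + tied_spin X u"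
  unfolding tied_spin_def using tied_iff[of X u] by (auto simp: spin_def)

lemma tied_spin_product:
  "tied_spin X u * tied_spin X v = (if tied X u \<and> tied X v then spin X u * spin X v else 0)"
  by (simp add: tied_spin_def)

lemma adj_coin_sum_row: "(\<Sum>v\<in>V. adj E u v * coin_sum X v) = nbr_sum X u"
proof -
  have "(\<Sum>v\<in>V. adj E u v * coin_sum X v) = (\<Sum>v\<in>V. if v \<in> nbhd u then coin_sum X v else 0)"
    by (intro sum.cong) (auto simp: adj_def nbhd_def)
  also have "\<dots> = (\<Sum>v\<in>V \<inter> nbhd u. coin_sum X v)" using finite_V by (simp add: sum.If_cases)
  finally show ?thesis using nbhd_subset by (simp add: nbr_sum_def Int_absorb1)
qed

lemma adj_tied_spin_coin_sum:
  "(\<Sum>u\<in>V. \<Sum>v\<in>V. adj E u v * (tied_spin X u * coin_sum X v)) =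
     (\<Sum>u\<in>V. if tied X u then \<bar>nbr_sum X u\<bar> else 0)"
proof -
  have "(\<Sum>u\<in>V. \<Sum>v\<in>V. adj E u v * (tied_spin X u * coin_sum X v)) =
      (\<Sum>u\<in>V. tied_spin X u * (\<Sum>v\<in>V. adj E u v * coin_sum X v))"
    by (simp add: sum_distrib_left algebra_simps)
  also have "\<dots> = (\<Sum>u\<in>V. if tied X u then \<bar>nbr_sum X u\<bar> else 0)"
    by (intro sum.cong) (auto simp: adj_coin_sum_row tied_spin_def spin_tied_times_nbr_sum)
  finally show ?thesis .
qed

lemma adj_spin_decomposition:
  "(\<Sum>u\<in>V. \<Sum>v\<in>V. adj E u v * (spin X u * spin X v)) =
     (\<Sum>u\<in>V. \<Sum>v\<in>V. adj E u v * (coin_sum X u * coin_sum X v))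
   + 2 * (\<Sum>u\<in>V. if tied X u then \<bar>nbr_sum X u\<bar> else 0)
   + (\<Sum>u\<in>V. \<Sum>v\<in>V. adj E u v * (tied_spin X u * tied_spin X v))"
proof -
  have "(\<Sum>u\<in>V. \<Sum>v\<in>V. adj E u v * (coin_sum X u * tied_spin X v)) =
      (\<Sum>u\<in>V. \<Sum>v\<in>V. adj E u v * (tied_spin X u * coin_sum X v))"
    by (subst sum.swap) (simp add: adj_sym algebra_simps)
  then show ?thesis
    unfolding spin_split[of X] adj_tied_spin_coin_sum[symmetric]
    by (simp add: algebra_simps sum.distrib)
qed

text \<open>Averaged over all coin outcomes, adjacent spins agree on average by at least
  \<open>n \<cdot> binom_mad d\<close>: coin sums are uncorrelated, each tied vertex aligns with its neighbours'
  coins, and adjacent tied spins are nonnegatively correlated.\<close>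
lemma sum_adj_spins:
  "(\<Sum>X\<in>Pow coins. \<Sum>u\<in>V. \<Sum>v\<in>V. adj E u v * (spin X u * spin X v)) \<ge> 2 ^ card coins * (real n * binom_mad d)"
proof -
  have coins: "(\<Sum>X\<in>Pow coins. \<Sum>u\<in>V. \<Sum>v\<in>V. adj E u v * (coin_sum X u * coin_sum X v)) = 0"
  proof -
    have "adj E u v * (\<Sum>X\<in>Pow coins. coin_sum X u * coin_sum X v) = 0" if "u \<in> V" for u v
      using coin_sums_uncorrelated[of u v] E_irrefl that by (cases "u = v") (auto simp: adj_def)
    then show ?thesis by (subst sum_swap3) (simp add: sum_distrib_left)
  qed
  have tied: "(\<Sum>X\<in>Pow coins. 2 * (\<Sum>u\<in>V. if tied X u then \<bar>nbr_sum X u\<bar> else 0)) =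
      2 ^ card coins * (real n * binom_mad d)"
  proof -
    have "(\<Sum>X\<in>Pow coins. 2 * (\<Sum>u\<in>V. if tied X u then \<bar>nbr_sum X u\<bar> else 0)) =
        2 * (\<Sum>u\<in>V. \<Sum>X\<in>Pow coins. if tied X u then \<bar>nbr_sum X u\<bar> else 0)"
      unfolding sum_distrib_left[symmetric] by (subst sum.swap) (rule refl)
    also have "\<dots> = 2 * (\<Sum>u\<in>V. 2 ^ card coins * binom_mad d / 2)"
      by (rule arg_cong[where f="(*) 2"], rule sum.cong) (simp_all add: sum_abs_nbr_sum_tied)
    finally show ?thesis using card_V by simp
  qed
  have "adj E u v * (\<Sum>X\<in>Pow coins. tied_spin X u * tied_spin X v) \<ge> 0" for u v
    using tied_spins_correlated[of u v] by (auto simp: adj_def tied_spin_product)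
  then have correlated: "(\<Sum>X\<in>Pow coins. \<Sum>u\<in>V. \<Sum>v\<in>V. adj E u v * (tied_spin X u * tied_spin X v)) \<ge> 0"
    by (subst sum_swap3) (simp add: sum_distrib_left sum_nonneg)
  show ?thesis
    unfolding adj_spin_decomposition sum.distrib using coins tied correlated by linarith
qed

text \<open>Vertices whose closed neighbourhood meets that of \<open>u\<close> are within distance two of \<open>u\<close>.\<close>
lemma card_close_vertices:
  assumes u: "u \<in> V"
  shows "card {v\<in>V. insert u (nbhd u) \<inter> insert v (nbhd v) \<noteq> {}} \<le> d * d + d + 1"
proof -
  have "{v\<in>V. insert u (nbhd u) \<inter> insert v (nbhd v) \<noteq> {}} \<subseteq> insert u (nbhd u \<union> (\<Union>x\<in>nbhd u. nbhd x))"
    using E_sym by (auto simp: nbhd_def)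
  then have "card {v\<in>V. insert u (nbhd u) \<inter> insert v (nbhd v) \<noteq> {}} \<le>
      card (insert u (nbhd u \<union> (\<Union>x\<in>nbhd u. nbhd x)))"
    using finite_nbhd by (intro card_mono) auto
  also have "\<dots> \<le> Suc (card (nbhd u \<union> (\<Union>x\<in>nbhd u. nbhd x)))"
    by (rule card_insert_le_m1) simp_all
  also have "card (nbhd u \<union> (\<Union>x\<in>nbhd u. nbhd x)) \<le> card (nbhd u) + card (\<Union>x\<in>nbhd u. nbhd x)"
    by (rule card_Un_le)
  also have "card (\<Union>x\<in>nbhd u. nbhd x) \<le> (\<Sum>x\<in>nbhd u. card (nbhd x))"
    using finite_nbhd by (rule card_UN_le)
  also have "(\<Sum>x\<in>nbhd u. card (nbhd x)) = d * d"
    using nbhd_subset card_nbhd card_nbhd[OF u] by (simp add: subset_iff)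
  finally show ?thesis using card_nbhd[OF u] by simp
qed

text \<open>Only close pairs of spins correlate, so the total spin product is \<open>O(n d\<^sup>2)\<close> on average.\<close>
lemma sum_spin_products:
  "(\<Sum>X\<in>Pow coins. \<Sum>u\<in>V. \<Sum>v\<in>V. spin X u * spin X v) \<le> 2 ^ card coins * (real n * (real d * real d + real d + 1))"
proof -
  have row: "(\<Sum>v\<in>V. \<Sum>X\<in>Pow coins. spin X u * spin X v) \<le> 2 ^ card coins * (real d * real d + real d + 1)"
    if u: "u \<in> V" for u
  proof -
    define R where "R = {v\<in>V. insert u (nbhd u) \<inter> insert v (nbhd v) \<noteq> {}}"
    have "(\<Sum>v\<in>V. \<Sum>X\<in>Pow coins. spin X u * spin X v) = (\<Sum>v\<in>R. \<Sum>X\<in>Pow coins. spin X u * spin X v)"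
      using finite_V spins_uncorrelated by (intro sum.mono_neutral_right) (auto simp: R_def)
    also have "\<dots> \<le> (\<Sum>v\<in>R. \<Sum>X\<in>Pow coins. 1)"
    proof (intro sum_mono)
      show "spin X u * spin X v \<le> 1" for X v using spin_pm1[of X u] spin_pm1[of X v] by auto
    qed
    also have "\<dots> = real (card R) * 2 ^ card coins" using card_Pow_coins by simp
    also have "\<dots> \<le> (real d * real d + real d + 1) * 2 ^ card coins"
      using card_close_vertices[OF u] unfolding R_def
      by (intro mult_right_mono) (simp_all flip: of_nat_mult of_nat_add of_nat_le_iff)
    finally show ?thesis by (simp add: mult.commute)
  qed
  have "(\<Sum>X\<in>Pow coins. \<Sum>u\<in>V. \<Sum>v\<in>V. spin X u * spin X v) = (\<Sum>u\<in>V. \<Sum>v\<in>V. \<Sum>X\<in>Pow coins. spin X u * spin X v)"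
    by (rule sum_swap3)
  also have "\<dots> \<le> (\<Sum>u\<in>V. 2 ^ card coins * (real d * real d + real d + 1))"
    using row by (rule sum_mono)
  finally show ?thesis using card_V by (simp add: mult.left_commute)
qed

text \<open>For a bisection \<open>(A, V - A)\<close> with signs \<open>s = \<plusminus>1\<close>, the modularity is the quadratic form
  \<open>\<Sum>(adj - d/n) s s / (2dn)\<close>, because every row of the modularity matrix sums to zero.\<close>
lemma bisection_modularity:
  assumes A: "A \<subseteq> V"
  defines "s \<equiv> \<lambda>u. if u \<in> A then 1 else -1 :: real"
  shows "cluster_modularity V E A + cluster_modularity V E (V - A) =
    (\<Sum>u\<in>V. \<Sum>v\<in>V. (adj E u v - real d / real n) * (s u * s v)) / (2 * real d * real n)"
proof -
  define F where "F u v = adj E u v - real d / real n" for u v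
  define B where "B = V - A"
  have V: "V = A \<union> B" "finite A" "finite B" "A \<inter> B = {}"
    using A finite_V by (auto simp: B_def intro: finite_subset)
  have "(\<Sum>v\<in>V. F u v) = 0" if "u \<in> V" for u
    using adj_row_sum[OF that] card_V n_pos by (simp add: F_def sum_subtractf)
  then have "(\<Sum>u\<in>A. \<Sum>v\<in>A. F u v) + (\<Sum>u\<in>A. \<Sum>v\<in>B. F u v) + (\<Sum>u\<in>B. \<Sum>v\<in>A. F u v)
      + (\<Sum>u\<in>B. \<Sum>v\<in>B. F u v) = 0"
    using double_sum_Un[OF V(2-4), of F] V(1) by simp
  moreover have "(\<Sum>u\<in>V. \<Sum>v\<in>V. F u v * (s u * s v)) = (\<Sum>u\<in>A. \<Sum>v\<in>A. F u v)
      - (\<Sum>u\<in>A. \<Sum>v\<in>B. F u v) - (\<Sum>u\<in>B. \<Sum>v\<in>A. F u v) + (\<Sum>u\<in>B. \<Sum>v\<in>B. F u v)"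
    unfolding V(1) double_sum_Un[OF V(2-4)] using V(4)
    by (simp add: s_def B_def sum_negf)
  ultimately have quad: "(\<Sum>u\<in>V. \<Sum>v\<in>V. F u v * (s u * s v)) =
      2 * ((\<Sum>u\<in>A. \<Sum>v\<in>A. F u v) + (\<Sum>u\<in>B. \<Sum>v\<in>B. F u v))" by (simp add: algebra_simps)
  have "cluster_modularity V E A + cluster_modularity V E B =
      ((\<Sum>u\<in>A. \<Sum>v\<in>A. F u v) + (\<Sum>u\<in>B. \<Sum>v\<in>B. F u v)) / (real d * real n)"
    using cluster_modularity_regular A by (simp add: F_def B_def add_divide_distrib)
  also have "\<dots> = (2 * ((\<Sum>u\<in>A. \<Sum>v\<in>A. F u v) + (\<Sum>u\<in>B. \<Sum>v\<in>B. F u v)))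
      / (2 * (real d * real n))"
    by (rule mult_divide_mult_cancel_left[symmetric]) simp
  also have "\<dots> = (\<Sum>u\<in>V. \<Sum>v\<in>V. F u v * (s u * s v)) / (2 * real d * real n)"
    unfolding quad by (simp only: mult.assoc)
  finally show ?thesis unfolding F_def B_def .
qed

text \<open>The quality of the bisection by the signs of the spins (up to the factor \<open>2dn\<close>).\<close>
definition bisection_value :: "('a \<times> bool) set \<Rightarrow> real" where
  "bisection_value X = (\<Sum>u\<in>V. \<Sum>v\<in>V. (adj E u v - real d / real n) * (spin X u * spin X v))"

lemma good_outcome_exists: "\<exists>X. bisection_value X \<ge> real n * binom_mad d - real d * (real d * real d + real d + 1)"
proof (rule ccontr)
  let ?b = "real n * binom_mad d - real d * (real d * real d + real d + 1)"
  assume "\<not> ?thesis"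
  then have "(\<Sum>X\<in>Pow coins. bisection_value X) < (\<Sum>X\<in>Pow coins. ?b)"
    using finite_coins by (intro sum_strict_mono) (auto simp: not_le)
  also have "\<dots> = 2 ^ card coins * ?b" using card_Pow_coins by simp
  finally have less: "(\<Sum>X\<in>Pow coins. bisection_value X) < 2 ^ card coins * ?b" .
  have "(\<Sum>X\<in>Pow coins. bisection_value X) = (\<Sum>X\<in>Pow coins. \<Sum>u\<in>V. \<Sum>v\<in>V. adj E u v * (spin X u * spin X v))
      - real d / real n * (\<Sum>X\<in>Pow coins. \<Sum>u\<in>V. \<Sum>v\<in>V. spin X u * spin X v)"
    unfolding bisection_value_def by (simp add: left_diff_distrib sum_subtractf sum_distrib_left)
  moreover have "real d / real n * (\<Sum>X\<in>Pow coins. \<Sum>u\<in>V. \<Sum>v\<in>V. spin X u * spin X v) \<le>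
      2 ^ card coins * (real d * (real d * real d + real d + 1))"
    using mult_left_mono[OF sum_spin_products, of "real d / real n"] n_pos by (simp add: mult.left_commute)
  ultimately show False using less sum_adj_spins by (simp add: right_diff_distrib)
qed

text \<open>Second bound: the sign bisection of a good coin outcome.\<close>
theorem OPT_ge_bisection:
  "OPT V E \<ge> (real n * binom_mad d - real d * (real d * real d + real d + 1)) / (2 * real d * real n)"
proof -
  obtain X where X: "bisection_value X \<ge> real n * binom_mad d - real d * (real d * real d + real d + 1)"
    using good_outcome_exists by blast
  define A where "A = {u\<in>V. spin X u = 1}"
  have A: "A \<subseteq> V" by (simp add: A_def)
  have "spin X u = (if u \<in> A then 1 else -1)" if "u \<in> V" for u
    using spin_pm1[of X u] that by (auto simp: A_def)
  then have "bisection_value X / (2 * real d * real n) = cluster_modularity V E A + cluster_modularity V E (V - A)"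
    unfolding bisection_modularity[OF A] bisection_value_def by (intro arg_cong2[where f="(/)"] sum.cong) auto
  moreover obtain S where S: "is_clustering V S"
    "modularity V E S = cluster_modularity V E A + cluster_modularity V E (V - A)"
    using bipartition_clustering[OF nonempty A] by blast
  ultimately have "OPT V E \<ge> bisection_value X / (2 * real d * real n)"
    using modularity_le_OPT[OF finite_V S(1), where E=E] S(2) by simp
  moreover have "bisection_value X / (2 * real d * real n) \<ge>
      (real n * binom_mad d - real d * (real d * real d + real d + 1)) / (2 * real d * real n)"
    using X degree_pos n_pos by (intro divide_right_mono) auto
  ultimately show ?thesis by linarith
qed

end

text \<open>Numerics of the second bound: for \<open>n > 40 d\<^sup>9\<close> the error term \<open>d(d\<^sup>2+d+1) \<le> 3d\<^sup>3\<close> is below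
  \<open>n\<surd>d/50\<close>, and \<open>(0.54 - 0.02)\<surd>d \<cdot> n/(2dn) = 0.26/\<surd>d\<close>.\<close>
lemma bisection_bound_numeric:
  fixes d n m :: real
  assumes d: "d \<ge> 3" and n: "n > 40 * d ^ 9" and m: "m \<ge> (27/50) * sqrt d"
  shows "(n * m - d * (d * d + d + 1)) / (2 * d * n) > 0.26 / sqrt d"
proof -
  have sqrt_d: "sqrt d \<ge> 1" "sqrt d * sqrt d = d" using d by auto
  have "40 * d ^ 9 > 0" using d by simp
  then have n_pos: "n > 0" using n by linarith
  have "d * d \<ge> 3 * d" using d by (intro mult_right_mono) auto
  then have "d * d + d + 1 \<le> 3 * (d * d)" using d by linarith
  then have "d * (d * d + d + 1) \<le> d * (3 * (d * d))" using d by (intro mult_left_mono) auto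
  also have "\<dots> = 3 * d ^ 3" by (simp add: power3_eq_cube)
  also have "3 * d ^ 3 \<le> d ^ 3 * d ^ 6 / 50"
  proof -
    have "d ^ 3 * 150 \<le> d ^ 3 * d ^ 6" using power_mono[OF d, of 6] d by (intro mult_left_mono) auto
    then show ?thesis by simp
  qed
  also have "d ^ 3 * d ^ 6 / 50 < n / 2000" using n by (simp add: power_add[symmetric])
  also have "n / 2000 \<le> n * sqrt d / 50"
  proof -
    have "n * 1 \<le> n * sqrt d" using sqrt_d(1) n_pos by (intro mult_left_mono) auto
    then show ?thesis using n_pos by linarith
  qed
  finally have small: "d * (d * d + d + 1) < (n * sqrt d) / 50" by simp
  have "n * m \<ge> n * ((27/50) * sqrt d)" using m n_pos by (intro mult_left_mono) auto
  then have "n * m - d * (d * d + d + 1) > (13/25) * (n * sqrt d)" using small by (simp add: algebra_simps)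
  then have "(n * m - d * (d * d + d + 1)) / (2 * d * n) > (13/25) * (n * sqrt d) / (2 * d * n)"
    using d n_pos by (intro divide_strict_right_mono) auto
  also have "(13/25) * (n * sqrt d) / (2 * d * n) = 0.26 * sqrt d / (sqrt d * sqrt d)"
    using n_pos d by (simp add: sqrt_d(2))
  also have "\<dots> = 0.26 / sqrt d"
  proof -
    have cancel: "(0.26 * t) / (t * t) = 0.26 / t" if "t > 0" for t :: real using that by simp
    show ?thesis by (rule cancel) (use sqrt_d(1) in simp)
  qed
  finally show ?thesis .
qed

theorem lemma9:
  fixes V :: "'a set" and E :: "'a \<Rightarrow> 'a \<Rightarrow> bool" and d n :: nat
  assumes "simple_graph V E"
    and "regular V E d"
    and "V \<noteq> {}"
    and "d \<ge> 3"
    and "card V = n"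
  shows "OPT V E > 0.86 / real d - 4 / real n \<and>
         (real n > 40 * real d ^ 9 \<longrightarrow> OPT V E > 0.26 / sqrt (real d))"
proof -
  interpret regular_graph V E d n using assms by unfold_locales auto
  have "0.86 / real d < 1 / real d" using assms(4) by (intro divide_strict_right_mono) auto
  then have "OPT V E > 0.86 / real d - 4 / real n" using OPT_ge_star_packing by linarith
  moreover have "OPT V E > 0.26 / sqrt (real d)" if "real n > 40 * real d ^ 9"
  proof -
    have "real d \<ge> 3" using assms(4) by simp
    from bisection_bound_numeric[OF this that binom_mad_lower[OF assms(4)]]
    show ?thesis using OPT_ge_bisection by linarith
  qed
  ultimately show ?thesis by blast
qed

end
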